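(* Let $\Gamma$ be a set of basic relations of Allen's interval algebra. If $\mathsf{m}\in\Gamma$, then $\Gamma$ implements $\mathsf{p}$. If $\mathsf{f}\in\Gamma$ and $\mathsf{s}\in\Gamma$, then $\Gamma$ implements $\mathsf{d}$ and $\Gamma$ implements $\mathsf{o}$.
   Context: Allen's interval algebra has domain $\mathbb{I}=\{[a,b] : a,b\in\mathbb{Q},\ a<b\}$; for $I=[a,b]$ write $I^-=a$, $I^+=b$. Relations: $x\,\mathsf{p}\,y$ iff $x^+<y^-$; $x\,\mathsf{m}\,y$ iff $x^+=y^-$; $x\,\mathsf{o}\,y$ iff $x^-<y^-<x^+<y^+$; $x\,\mathsf{d}\,y$ iff $y^-<x^-$ and $x^+<y^+$; $x\,\mathsf{s}\,y$ iff $x^-=y^-$ and $x^+<y^+$; $x\,\mathsf{f}\,y$ iff $x^+=y^+$ and $y^-<x^-$. A (simple) implementation of a binary relation $r$ in a constraint language $\Gamma$ is a CSP instance $\mathcal{C}_r$ over $\Gamma$ with primary variables $x_1,x_2$ and possibly auxiliary variables $y_1,\dots,y_\ell$ such that (i) every assignment satisfying $\mathcal{C}_r$ satisfies $x_1\,r\,x_2$, and (ii) every assignment to $x_1,x_2$ not satisfying $x_1\,r\,x_2$ can be extended to $y_1,\dots,y_\ell$ so that all but one constraint of $\mathcal{C}_r$ are satisfied. $\Gamma$ implements $r$ if such an implementation exists. *)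

theory Defs
  imports Main "HOL.Rat"
begin

type_synonym interval = "rat \<times> rat"

definition is_interval :: "interval \<Rightarrow> bool" where
  "is_interval I \<longleftrightarrow> fst I < snd I"

datatype allen = Pr | Me | Ov | Du | St | Fi | PrI | MeI | OvI | DuI | StI | FiI | Eq

fun holds :: "allen \<Rightarrow> interval \<Rightarrow> interval \<Rightarrow> bool" where
  "holds Pr x y \<longleftrightarrow> snd x < fst y"
| "holds Me x y \<longleftrightarrow> snd x = fst y"
| "holds Ov x y \<longleftrightarrow> fst x < fst y \<and> fst y < snd x \<and> snd x < snd y"
| "holds Du x y \<longleftrightarrow> fst y < fst x \<and> snd x < snd y"
| "holds St x y \<longleftrightarrow> fst x = fst y \<and> snd x < snd y"
| "holds Fi x y \<longleftrightarrow> snd x = snd y \<and> fst y < fst x"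
| "holds PrI x y \<longleftrightarrow> snd y < fst x"
| "holds MeI x y \<longleftrightarrow> snd y = fst x"
| "holds OvI x y \<longleftrightarrow> fst y < fst x \<and> fst x < snd y \<and> snd y < snd x"
| "holds DuI x y \<longleftrightarrow> fst x < fst y \<and> snd y < snd x"
| "holds StI x y \<longleftrightarrow> fst y = fst x \<and> snd y < snd x"
| "holds FiI x y \<longleftrightarrow> snd y = snd x \<and> fst x < fst y"
| "holds Eq x y \<longleftrightarrow> x = y"

datatype var = X1 | X2 | Y nat

text \<open>A constraint (r, u, v) means u r v.  An instance is a list of constraints
  (a multiset; duplicates are counted separately).\<close>
type_synonym constr = "allen \<times> var \<times> var"

fun sat :: "(var \<Rightarrow> interval) \<Rightarrow> constr \<Rightarrow> bool" where
  "sat \<sigma> (r, u, v) \<longleftrightarrow> holds r (\<sigma> u) (\<sigma> v)"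

definition valid_assign :: "(var \<Rightarrow> interval) \<Rightarrow> bool" where
  "valid_assign \<sigma> \<longleftrightarrow> (\<forall>v. is_interval (\<sigma> v))"

fun var_ok :: "nat \<Rightarrow> var \<Rightarrow> bool" where
  "var_ok l X1 = True"
| "var_ok l X2 = True"
| "var_ok l (Y i) = (i < l)"

definition instance_over :: "allen set \<Rightarrow> nat \<Rightarrow> constr list \<Rightarrow> bool" where
  "instance_over \<Gamma> l C \<longleftrightarrow>
     (\<forall>(r, u, v) \<in> set C. r \<in> \<Gamma> \<and> var_ok l u \<and> var_ok l v)"

definition is_implementation :: "allen set \<Rightarrow> allen \<Rightarrow> nat \<Rightarrow> constr list \<Rightarrow> bool" where
  "is_implementation \<Gamma> r l C \<longleftrightarrow>
     instance_over \<Gamma> l C \<and>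
     (\<forall>\<sigma>. valid_assign \<sigma> \<and> (\<forall>c \<in> set C. sat \<sigma> c) \<longrightarrow> holds r (\<sigma> X1) (\<sigma> X2)) \<and>
     (\<forall>a b. is_interval a \<and> is_interval b \<and> \<not> holds r a b \<longrightarrow>
        (\<exists>\<sigma>. valid_assign \<sigma> \<and> \<sigma> X1 = a \<and> \<sigma> X2 = b \<and>
             length (filter (\<lambda>c. \<not> sat \<sigma> c) C) \<le> 1))"

definition implements :: "allen set \<Rightarrow> allen \<Rightarrow> bool" where
  "implements \<Gamma> r \<longleftrightarrow> (\<exists>l C. is_implementation \<Gamma> r l C)"

end

theory Submission
  imports Defs
begin

(* Each implementation uses a single auxiliary interval y: x1 m y m x2 forces x1 p x2 because y
   has positive length; y s x2 together with x1 f y (resp. y f x1) places x1 during (resp.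
   overlapping) x2. For condition (ii), every basic relation can be realised between a
   given interval and a suitable y, so for arbitrary x1, x2 the first constraint can be
   satisfied by the choice of y, and only the second one may be violated. *)

fun allen_conv :: "allen \<Rightarrow> allen" where
  "allen_conv Pr = PrI" | "allen_conv Me = MeI" | "allen_conv Ov = OvI"
| "allen_conv Du = DuI" | "allen_conv St = StI" | "allen_conv Fi = FiI"
| "allen_conv PrI = Pr" | "allen_conv MeI = Me" | "allen_conv OvI = Ov"
| "allen_conv DuI = Du" | "allen_conv StI = St" | "allen_conv FiI = Fi"
| "allen_conv Eq = Eq"

lemma holds_allen_conv: "holds (allen_conv r) x y \<longleftrightarrow> holds r y x"
  by (cases r) auto

lemma ex_holds_right:
  assumes "is_interval a"
  shows "\<exists>y. is_interval y \<and> holds r a y"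
proof -
  obtain p q where a: "a = (p, q)" and "p < q"
    using assms by (cases a) (auto simp: is_interval_def)
  define m where "m = (p + q) / 2"
  have m: "p < m" "m < q"
    using \<open>p < q\<close> by (simp_all add: m_def field_simps)
  have "is_interval y \<and> holds r a y" if "y = (case r of
      Pr \<Rightarrow> (q + 1, q + 2) | Me \<Rightarrow> (q, q + 1) | Ov \<Rightarrow> (m, q + 1) | Du \<Rightarrow> (p - 1, q + 1)
    | St \<Rightarrow> (p, q + 1) | Fi \<Rightarrow> (p - 1, q) | PrI \<Rightarrow> (p - 2, p - 1) | MeI \<Rightarrow> (p - 1, p)
    | OvI \<Rightarrow> (p - 1, m) | DuI \<Rightarrow> ((p + m) / 2, m) | StI \<Rightarrow> (p, m) | FiI \<Rightarrow> (m, q)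
    | Eq \<Rightarrow> (p, q))" for y
    using that m by (cases r) (auto simp: a is_interval_def field_simps)
  then show ?thesis by blast
qed

lemma ex_holds_left:
  assumes "is_interval a"
  shows "\<exists>y. is_interval y \<and> holds r y a"
  using ex_holds_right[OF assms, of "allen_conv r"] by (simp add: holds_allen_conv)

lemma valid_assign_case_var:
  "is_interval a \<Longrightarrow> is_interval b \<Longrightarrow> is_interval y \<Longrightarrow> valid_assign (case_var a b (\<lambda>_. y))"
  by (simp add: valid_assign_def split: var.split)

lemma is_implementation_pairI:
  assumes "instance_over \<Gamma> 1 [c, d]"
    and c: "c \<in> {(s, u, Y 0), (s, Y 0, u)}" and u: "u \<in> {X1, X2}"
    and "\<And>\<sigma>. valid_assign \<sigma> \<Longrightarrow> sat \<sigma> c \<Longrightarrow> sat \<sigma> d \<Longrightarrow> holds r (\<sigma> X1) (\<sigma> X2)"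
  shows "is_implementation \<Gamma> r 1 [c, d]"
  unfolding is_implementation_def
proof (intro conjI allI impI)
  fix a b :: interval
  assume ab: "is_interval a \<and> is_interval b \<and> \<not> holds r a b"
  define w where "w = case_var a b (\<lambda>_. a) u"
  have w: "is_interval w"
    using ab u by (auto simp: w_def)
  have primary: "case_var a b (\<lambda>_. y) u = w" for y
    using u by (auto simp: w_def)
  obtain y where "is_interval y" "sat (case_var a b (\<lambda>_. y)) c"
  proof (cases "c = (s, u, Y 0)")
    case True
    obtain y where "is_interval y" "holds s w y"
      using ex_holds_right[OF w] by blast
    then show thesis
      using that[of y] by (simp add: True primary)
  next
    case False
    then have "c = (s, Y 0, u)"
      using c by blast
    obtain y where "is_interval y" "holds s y w"
      using ex_holds_left[OF w] by blast
    then show thesis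
      using that[of y] by (simp add: \<open>c = (s, Y 0, u)\<close> primary)
  qed
  then show "\<exists>\<sigma>. valid_assign \<sigma> \<and> \<sigma> X1 = a \<and> \<sigma> X2 = b \<and>
               length (filter (\<lambda>c. \<not> sat \<sigma> c) [c, d]) \<le> 1"
    using ab by (intro exI[of _ "case_var a b (\<lambda>_. y)"]) (simp add: valid_assign_case_var)
qed (use assms in auto)

lemma is_implementation_Pr:
  assumes "Me \<in> \<Gamma>"
  shows "is_implementation \<Gamma> Pr 1 [(Me, X1, Y 0), (Me, Y 0, X2)]"
proof (rule is_implementation_pairI)
  fix \<sigma> :: "var \<Rightarrow> interval"
  assume "valid_assign \<sigma>"
  then have "is_interval (\<sigma> (Y 0))" by (simp add: valid_assign_def)
  then show "sat \<sigma> (Me, X1, Y 0) \<Longrightarrow> sat \<sigma> (Me, Y 0, X2) \<Longrightarrow> holds Pr (\<sigma> X1) (\<sigma> X2)"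
    by (simp add: is_interval_def)
qed (use assms in \<open>auto simp: instance_over_def\<close>)

lemma is_implementation_Du:
  assumes "St \<in> \<Gamma>" "Fi \<in> \<Gamma>"
  shows "is_implementation \<Gamma> Du 1 [(St, Y 0, X2), (Fi, X1, Y 0)]"
  by (rule is_implementation_pairI) (use assms in \<open>auto simp: instance_over_def\<close>)

lemma is_implementation_Ov:
  assumes "St \<in> \<Gamma>" "Fi \<in> \<Gamma>"
  shows "is_implementation \<Gamma> Ov 1 [(St, Y 0, X2), (Fi, Y 0, X1)]"
proof (rule is_implementation_pairI)
  fix \<sigma> :: "var \<Rightarrow> interval"
  assume "valid_assign \<sigma>"
  then have "is_interval (\<sigma> (Y 0))" by (simp add: valid_assign_def)
  then show "sat \<sigma> (St, Y 0, X2) \<Longrightarrow> sat \<sigma> (Fi, Y 0, X1) \<Longrightarrow> holds Ov (\<sigma> X1) (\<sigma> X2)"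
    by (auto simp: is_interval_def)
qed (use assms in \<open>auto simp: instance_over_def\<close>)

theorem mainTheorem6:
  fixes \<Gamma> :: "allen set"
  shows "(Me \<in> \<Gamma> \<longrightarrow> implements \<Gamma> Pr) \<and>
         (Fi \<in> \<Gamma> \<and> St \<in> \<Gamma> \<longrightarrow> implements \<Gamma> Du \<and> implements \<Gamma> Ov)"
  unfolding implements_def
  using is_implementation_Pr is_implementation_Du is_implementation_Ov by blast

end
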